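(* Let $k\ge3$ be odd, $p\in[0,1]$ and $q\in[0,1]$, and consider the mean-field Node-Majority process on the infinite tree $\mathcal T$ with root $v_0$ started from i.i.d. initial states with $\Pr(x_v^{(0)}=\mathcal R)=q$. Then $$\lim_{t\to\infty}\Pr(x_{v_0}^{(t)}=\mathcal R)=\begin{cases}\hat\varphi^+_{p,k} & \text{if } p<p_k^\star \text{ and } q>\hat\varphi^-_{p,k},\\ 0 & \text{if } p<p_k^\star\text{ and } q<\hat\varphi^-_{p,k},\\ 0 & \text{if } p>p_k^\star.\end{cases}$$
   Context: $\mathcal T$ is the infinite rooted tree with root $v_0$ in which every vertex has exactly $k$ children. Each vertex $v$ has a state $x_v^{(t)}\in\{\mathcal R,\mathcal B\}$ at each round $t\in\mathbb N_0$. At $t=0$ each vertex is $\mathcal R$ with probability $q$ independently. For $t\ge0$, each vertex $v$ independently of everything else becomes $\mathcal B$ at round $t+1$ with probability $p$; otherwise $x_v^{(t+1)}$ is the majority among the states $x_w^{(t)}$ of its $k$ children. Let $F_{p,k}(x)=\Pr[\mathrm{Bin}(k,(1-p)x)\ge(k+1)/2]$ and $\widehat F_{p,k}(x)=(1-p)\Pr[\mathrm{Bin}(k,x)\ge(k+1)/2]$ for $x\in[0,1]$. $p_k^\star\in[1/9,1/2)$ is the (unique) value such that for $0\le p<p_k^\star$ the equation $F_{p,k}(x)=x$ on $[0,1]$ has exactly three solutions, for $p=p_k^\star$ exactly two, and for $p>p_k^\star$ only $0$. For $0\le p<p_k^\star$ the equation $\widehat F_{p,k}(x)=x$ on $[0,1]$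 has exactly three solutions $0<\hat\varphi^-_{p,k}<\hat\varphi^+_{p,k}$. *)

theory Defs
  imports "HOL-Probability.Probability"
begin

definition maj_prob :: "nat \<Rightarrow> real \<Rightarrow> real" where
  "maj_prob k x = measure_pmf.prob (binomial_pmf k x) {j. 2 * j \<ge> k + 1}"

definition F_map :: "real \<Rightarrow> nat \<Rightarrow> real \<Rightarrow> real" where
  "F_map p k x = maj_prob k ((1 - p) * x)"

definition Fhat_map :: "real \<Rightarrow> nat \<Rightarrow> real \<Rightarrow> real" where
  "Fhat_map p k x = (1 - p) * maj_prob k x"

definition fixpts_F :: "real \<Rightarrow> nat \<Rightarrow> real set" where
  "fixpts_F p k = {x \<in> {0..1}. F_map p k x = x}"

definition fixpts_Fhat :: "real \<Rightarrow> nat \<Rightarrow> real set" where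
  "fixpts_Fhat p k = {x \<in> {0..1}. Fhat_map p k x = x}"

definition pstar :: "nat \<Rightarrow> real" where
  "pstar k = (THE ps. 1/9 \<le> ps \<and> ps < 1/2
      \<and> (\<forall>p. 0 \<le> p \<and> p < ps \<longrightarrow> card (fixpts_F p k) = 3)
      \<and> card (fixpts_F ps k) = 2
      \<and> (\<forall>p. ps < p \<and> p \<le> 1 \<longrightarrow> fixpts_F p k = {0}))"

text \<open>The three fixed points 0 < phi_minus < phi_plus of Fhat (for p < pstar).\<close>
definition phi_minus :: "real \<Rightarrow> nat \<Rightarrow> real" where
  "phi_minus p k = sorted_list_of_set (fixpts_Fhat p k) ! 1"

definition phi_plus :: "real \<Rightarrow> nat \<Rightarrow> real" where
  "phi_plus p k = sorted_list_of_set (fixpts_Fhat p k) ! 2"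

text \<open>Vertices of the k-ary tree are lists of child indices (< k),
  root = []; children of v are i # v for i < k. The randomness is a family of
  independent bits: \<omega> (Inl v) = initial state of v is Red;
  \<omega> (Inr (v,t)) = v is forced to Blue at round t+1. State True = Red.\<close>

type_synonym nm_omega = "(nat list + nat list \<times> nat) \<Rightarrow> bool"

definition nm_space :: "real \<Rightarrow> real \<Rightarrow> nm_omega measure" where
  "nm_space p q = PiM UNIV (\<lambda>i. case i of
       Inl _ \<Rightarrow> measure_pmf (bernoulli_pmf q)
     | Inr _ \<Rightarrow> measure_pmf (bernoulli_pmf p))"

primrec nm_state :: "nat \<Rightarrow> nm_omega \<Rightarrow> nat \<Rightarrow> nat list \<Rightarrow> bool" where
  "nm_state k \<omega> 0 v = \<omega> (Inl v)"
| "nm_state k \<omega> (Suc t) v =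
     (\<not> \<omega> (Inr (v, t)) \<and> 2 * card {i. i < k \<and> nm_state k \<omega> t (i # v)} \<ge> k + 1)"

definition root_red_prob :: "nat \<Rightarrow> real \<Rightarrow> real \<Rightarrow> nat \<Rightarrow> real" where
  "root_red_prob k p q t =
     measure (nm_space p q) {\<omega> \<in> space (nm_space p q). nm_state k \<omega> t []}"

end

theory Submission
  imports Defs
begin

text \<open>
  The state of a vertex after round \<open>t + 1\<close> is a function of its own blue coin for that round
  and of the states of its \<open>k\<close> children after round \<open>t\<close>; these depend on disjoint sets of
  independent coordinates. Hence the probability that a vertex is red after \<open>t\<close> rounds is
  \<open>Fhat\<^sup>t(q)\<close>.

  For \<open>k = 2m + 1\<close> we have \<open>Fhat(x) = (1 - p) B(x)\<close> with \<open>B\<close> the majority polynomial, so a point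
  \<open>x > 0\<close> is fixed iff \<open>B(x)/x = 1/(1 - p)\<close>, and \<open>Fhat(x) < x\<close> iff \<open>B(x)/x < 1/(1 - p)\<close>.
  The ratio \<open>B(x)/x\<close> tends to \<open>B'(0) = 0\<close> at \<open>0\<close>, equals \<open>1\<close> at \<open>1\<close>, and is strictly unimodal
  with maximum \<open>M \<in> [9/8, 2)\<close>: its derivative is \<open>-I(x)/x\<^sup>2\<close>, where the tangent intercept
  \<open>I(x) = B(x) - x B'(x)\<close> is negative on \<open>(0, 1/2]\<close> and increasing on \<open>[1/2, 1]\<close>, as \<open>B'\<close> is
  increasing and then decreasing. So \<open>p\<^sub>k\<^sup>\<star> = 1 - 1/M \<in> [1/9, 1/2)\<close>; below it the level
  \<open>1/(1 - p)\<close> is attained exactly at \<open>\<phi>\<^sup>- < \<phi>\<^sup>+\<close>, above it \<open>Fhat(x) < x\<close> on \<open>(0, 1]\<close>.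
  Since \<open>Fhat\<close> is increasing and continuous, its iterates converge monotonically to the
  fixed point that attracts the starting value.
\<close>

section \<open>Binomial tails\<close>

definition binom_term :: "nat \<Rightarrow> nat \<Rightarrow> real \<Rightarrow> real" where
  "binom_term n j x = real (n choose j) * x ^ j * (1 - x) ^ (n - j)"

lemma maj_prob_eq_sum:
  assumes "0 \<le> x" "x \<le> 1"
  shows "maj_prob k x = (\<Sum>c | c \<le> k \<and> k + 1 \<le> 2 * c. binom_term k c x)"
proof -
  let ?B = "binomial_pmf k x"
  let ?A = "{j. k + 1 \<le> 2 * j}"
  have "maj_prob k x = measure (measure_pmf ?B) (?A \<inter> set_pmf ?B)"
    unfolding maj_prob_def by (simp add: measure_Int_set_pmf)
  also have "?A \<inter> set_pmf ?B = {c. c \<le> k \<and> k + 1 \<le> 2 * c} \<inter> set_pmf ?B"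
    using assms by (auto simp: set_pmf_binomial_eq split: if_splits)
  also have "measure (measure_pmf ?B) \<dots> = measure (measure_pmf ?B) {c. c \<le> k \<and> k + 1 \<le> 2 * c}"
    by (simp add: measure_Int_set_pmf)
  also have "\<dots> = (\<Sum>c | c \<le> k \<and> k + 1 \<le> 2 * c. pmf ?B c)"
    by (rule measure_measure_pmf_finite) simp
  finally show ?thesis
    using assms by (simp add: binom_term_def)
qed

definition binom_tail :: "nat \<Rightarrow> nat \<Rightarrow> real \<Rightarrow> real" where
  "binom_tail n a x = (\<Sum>j\<in>{a..n}. binom_term n j x)"

lemma maj_prob_eq_binom_tail:
  "0 \<le> x \<Longrightarrow> x \<le> 1 \<Longrightarrow> maj_prob k x = binom_tail k (Suc (k div 2)) x"
  unfolding maj_prob_eq_sum binom_tail_def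
  by (rule sum.cong) auto

lemma binom_term_eq_0: "n < j \<Longrightarrow> binom_term n j x = 0"
  by (simp add: binom_term_def binomial_eq_0)

lemma binom_term_Suc_Suc:
  "binom_term (Suc n) (Suc j) x = x * binom_term n j x + (1 - x) * binom_term n (Suc j) x"
proof (cases "j < n")
  case True
  then have e: "(1 - x) ^ (n - j) = (1 - x) * (1 - x) ^ (n - Suc j)"
    by (simp add: Suc_diff_Suc flip: power_Suc)
  have "binom_term (Suc n) (Suc j) x
      = (real (n choose j) + real (n choose Suc j)) * x ^ Suc j * (1 - x) ^ (n - j)"
    by (simp add: binom_term_def)
  also have "\<dots> = x * binom_term n j x + (1 - x) * binom_term n (Suc j) x"
    unfolding binom_term_def e by (simp add: algebra_simps)
  finally show ?thesis .
next
  case False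
  then show ?thesis
    by (cases "j = n") (auto simp: binom_term_def binomial_eq_0)
qed

lemma binom_tail_eq_0: "n < a \<Longrightarrow> binom_tail n a x = 0"
  by (simp add: binom_tail_def)

lemma binom_tail_0: "binom_tail n 0 x = 1"
  using binomial_ring[of x "1 - x" n] by (simp add: binom_tail_def binom_term_def atLeast0AtMost)

lemma binom_tail_split: "binom_tail n a x = binom_term n a x + binom_tail n (Suc a) x"
  by (cases "a \<le> n") (simp_all add: binom_tail_def sum.atLeast_Suc_atMost binom_term_eq_0)

lemma binom_tail_Suc_Suc:
  "binom_tail (Suc n) (Suc a) x = x * binom_tail n a x + (1 - x) * binom_tail n (Suc a) x"
proof (cases "a \<le> n")
  case True
  have "binom_tail (Suc n) (Suc a) x = (\<Sum>j\<in>{a..n}. binom_term (Suc n) (Suc j) x)"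
    unfolding binom_tail_def by (rule sum.shift_bounds_cl_Suc_ivl)
  also have "\<dots> = x * binom_tail n a x + (1 - x) * (\<Sum>j\<in>{a..n}. binom_term n (Suc j) x)"
    by (simp add: binom_term_Suc_Suc binom_tail_def sum.distrib sum_distrib_left)
  also have "(\<Sum>j\<in>{a..n}. binom_term n (Suc j) x) = (\<Sum>j\<in>{Suc a..Suc n}. binom_term n j x)"
    by (rule sum.shift_bounds_cl_Suc_ivl[symmetric])
  also have "\<dots> = binom_tail n (Suc a) x"
    using True by (simp add: binom_tail_def binom_term_eq_0)
  finally show ?thesis .
qed (simp add: binom_tail_eq_0)

lemma binom_tail_1: "binom_tail n 1 x = 1 - (1 - x) ^ n"
  using binom_tail_split[of n 0 x] by (simp add: binom_tail_0 binom_term_def)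

lemma binom_tail_Suc_0_has_derivative:
  "(binom_tail (Suc n) (Suc 0) has_real_derivative real (Suc n) * binom_term n 0 x) (at x)"
proof -
  have "binom_tail (Suc n) (Suc 0) = (\<lambda>x. 1 - (1 - x) ^ Suc n)"
    using binom_tail_1 by (simp add: fun_eq_iff)
  moreover have "((\<lambda>x. 1 - (1 - x) ^ Suc n) has_real_derivative
      0 - real (Suc n) * ((0 - 1) * (1 - x) ^ (Suc n - Suc 0))) (at x)"
    by (intro derivative_intros DERIV_power)
  ultimately show ?thesis
    by (simp add: binom_term_def)
qed

lemma binom_tail_has_derivative:
  "(binom_tail (Suc n) (Suc a) has_real_derivative real (Suc n) * binom_term n a x) (at x)"
proof (induction n arbitrary: a)
  case 0
  show ?case
  proof (cases a)
    case (Suc a')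
    then have "binom_tail 1 (Suc a) = (\<lambda>x. 0)"
      by (simp add: fun_eq_iff binom_tail_eq_0)
    then show ?thesis using Suc by (simp add: binom_term_def)
  qed (simp only: binom_tail_Suc_0_has_derivative)
next
  case (Suc n)
  show ?case
  proof (cases a)
    case 0
    then show ?thesis by (simp only: binom_tail_Suc_0_has_derivative)
  next
    case (Suc a')
    have tail: "binom_tail (Suc (Suc n)) (Suc a)
        = (\<lambda>x. x * binom_tail (Suc n) a x + (1 - x) * binom_tail (Suc n) (Suc a) x)"
      by (simp add: fun_eq_iff binom_tail_Suc_Suc)
    have deriv: "((\<lambda>x. x * binom_tail (Suc n) a x + (1 - x) * binom_tail (Suc n) (Suc a) x)
        has_real_derivative (binom_tail (Suc n) a x - binom_tail (Suc n) (Suc a) x)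
          + real (Suc n) * (x * binom_term n a' x + (1 - x) * binom_term n a x)) (at x)"
      using Suc by (auto intro!: derivative_eq_intros Suc.IH simp: algebra_simps)
    have "binom_tail (Suc n) a x - binom_tail (Suc n) (Suc a) x = binom_term (Suc n) a x"
      by (simp add: binom_tail_split[of "Suc n" a])
    moreover have "x * binom_term n a' x + (1 - x) * binom_term n a x = binom_term (Suc n) a x"
      using Suc by (simp add: binom_term_Suc_Suc)
    ultimately have "(binom_tail (Suc n) a x - binom_tail (Suc n) (Suc a) x)
          + real (Suc n) * (x * binom_term n a' x + (1 - x) * binom_term n a x)
        = real (Suc (Suc n)) * binom_term (Suc n) a x"
      by (simp add: algebra_simps)
    then show ?thesis
      using deriv tail by (simp only:)
  qed
qed

lemma maj_prob_0 [simp]: "maj_prob k 0 = 0"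
  by (simp add: maj_prob_eq_sum binom_term_def)

section \<open>Independent Boolean random variables\<close>

lemma prod_if_mem_eq_power:
  fixes a b :: "'a :: comm_monoid_mult"
  assumes "finite A" "S \<subseteq> A"
  shows "(\<Prod>j\<in>A. if j \<in> S then a else b) = a ^ card S * b ^ (card A - card S)"
proof -
  have "(\<Prod>j\<in>A. if j \<in> S then a else b) = (\<Prod>j\<in>S. a) * (\<Prod>j\<in>A - S. b)"
    using assms by (subst prod.If_cases) (auto simp: Int_absorb1 Diff_eq)
  then show ?thesis
    using assms by (simp add: card_Diff_subset finite_subset)
qed

lemma sum_subsets_by_card:
  fixes f :: "nat \<Rightarrow> 'a :: comm_semiring_1"
  assumes "finite A"
  shows "(\<Sum>S | S \<subseteq> A \<and> P (card S). f (card S))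
       = (\<Sum>c | c \<le> card A \<and> P c. of_nat (card A choose c) * f c)"
proof -
  let ?\<S> = "{S. S \<subseteq> A \<and> P (card S)}"
  have "(\<Sum>S\<in>?\<S>. f (card S)) = (\<Sum>c | c \<le> card A \<and> P c. \<Sum>S | S \<in> ?\<S> \<and> card S = c. f (card S))"
  proof (rule sum.group[symmetric])
    show "finite ?\<S>" by (rule finite_subset[of _ "Pow A"]) (use assms in auto)
    show "card ` ?\<S> \<subseteq> {c. c \<le> card A \<and> P c}" using assms by (auto intro: card_mono)
  qed simp
  also have "\<dots> = (\<Sum>c | c \<le> card A \<and> P c. of_nat (card A choose c) * f c)"
  proof (rule sum.cong[OF refl])
    fix c assume "c \<in> {c. c \<le> card A \<and> P c}"
    then have "{S. S \<in> ?\<S> \<and> card S = c} = {S. S \<subseteq> A \<and> card S = c}" by auto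
    then show "(\<Sum>S | S \<in> ?\<S> \<and> card S = c. f (card S)) = of_nat (card A choose c) * f c"
      using n_subsets[OF assms, of c] by simp
  qed
  finally show ?thesis .
qed

lemma (in prob_space) prob_indep_bool_pattern:
  assumes indep: "indep_vars (\<lambda>_. count_space UNIV) X I" and "finite I"
  shows "prob {\<omega> \<in> space M. \<forall>i\<in>I. X i \<omega> = (i \<in> S)}
       = (\<Prod>i\<in>I. if i \<in> S then prob {\<omega> \<in> space M. X i \<omega>} else 1 - prob {\<omega> \<in> space M. X i \<omega>})"
proof (cases "I = {}")
  case True
  then show ?thesis by (simp add: prob_space)
next
  case False
  have "{\<omega> \<in> space M. \<forall>i\<in>I. X i \<omega> = (i \<in> S)} = (\<Inter>i\<in>I. X i -` {i \<in> S} \<inter> space M)"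
    using False by auto
  also have "prob \<dots> = (\<Prod>i\<in>I. prob (X i -` {i \<in> S} \<inter> space M))"
    by (rule indep_varsD[OF indep False \<open>finite I\<close>]) auto
  also have "\<dots> = (\<Prod>i\<in>I. if i \<in> S then prob {\<omega> \<in> space M. X i \<omega>} else 1 - prob {\<omega> \<in> space M. X i \<omega>})"
  proof (rule prod.cong[OF refl])
    fix i assume "i \<in> I"
    then have "Measurable.pred M (X i)"
      using indep by (simp add: indep_vars_def)
    then have "prob (space M - {\<omega> \<in> space M. X i \<omega>}) = 1 - prob {\<omega> \<in> space M. X i \<omega>}"
      by (intro prob_compl) measurable
    moreover have "X i -` {True} \<inter> space M = {\<omega> \<in> space M. X i \<omega>}"
      and "X i -` {False} \<inter> space M = space M - {\<omega> \<in> space M. X i \<omega>}" by auto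
    ultimately show "prob (X i -` {i \<in> S} \<inter> space M)
        = (if i \<in> S then prob {\<omega> \<in> space M. X i \<omega>} else 1 - prob {\<omega> \<in> space M. X i \<omega>})"
      by (cases "i \<in> S") simp_all
  qed
  finally show ?thesis .
qed

lemma (in prob_space) prob_indep_bool_set:
  assumes indep: "indep_vars (\<lambda>_. count_space UNIV) X I" and "finite I" and "\<S> \<subseteq> Pow I"
  shows "prob {\<omega> \<in> space M. {i \<in> I. X i \<omega>} \<in> \<S>}
       = (\<Sum>S\<in>\<S>. \<Prod>i\<in>I. if i \<in> S then prob {\<omega> \<in> space M. X i \<omega>} else 1 - prob {\<omega> \<in> space M. X i \<omega>})"
proof -
  let ?G = "\<lambda>S. {\<omega> \<in> space M. \<forall>i\<in>I. X i \<omega> = (i \<in> S)}"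
  have meas: "\<And>i. i \<in> I \<Longrightarrow> Measurable.pred M (X i)"
    using indep by (simp add: indep_vars_def)
  have "{\<omega> \<in> space M. {i \<in> I. X i \<omega>} \<in> \<S>} = (\<Union>S\<in>\<S>. ?G S)"
  proof (intro equalityI subsetI)
    fix \<omega> assume "\<omega> \<in> {\<omega> \<in> space M. {i \<in> I. X i \<omega>} \<in> \<S>}"
    then show "\<omega> \<in> (\<Union>S\<in>\<S>. ?G S)" by (intro UN_I[of "{i \<in> I. X i \<omega>}"]) auto
  next
    fix \<omega> assume "\<omega> \<in> (\<Union>S\<in>\<S>. ?G S)"
    then obtain S where "S \<in> \<S>" "\<omega> \<in> ?G S" by blast
    moreover then have "{i \<in> I. X i \<omega>} = S" using \<open>\<S> \<subseteq> Pow I\<close> by auto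
    ultimately show "\<omega> \<in> {\<omega> \<in> space M. {i \<in> I. X i \<omega>} \<in> \<S>}" by simp
  qed
  also have "prob \<dots> = (\<Sum>S\<in>\<S>. prob (?G S))"
  proof (rule finite_measure_finite_Union)
    show "finite \<S>" using assms(2,3) by (simp add: finite_subset)
    have "?G S \<in> events" for S using meas \<open>finite I\<close> by measurable
    then show "?G ` \<S> \<subseteq> events" by blast
    show "disjoint_family_on ?G \<S>"
      using \<open>\<S> \<subseteq> Pow I\<close> by (auto simp: disjoint_family_on_def)
  qed
  finally show ?thesis
    by (simp add: prob_indep_bool_pattern[OF indep \<open>finite I\<close>])
qed

section \<open>The root probability as an iterate of \<open>Fhat\<close>\<close>

definition nm_coord :: "real \<Rightarrow> real \<Rightarrow> nat list + nat list \<times> nat \<Rightarrow> bool measure" where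
  "nm_coord p q i = (case i of
       Inl _ \<Rightarrow> measure_pmf (bernoulli_pmf q)
     | Inr _ \<Rightarrow> measure_pmf (bernoulli_pmf p))"

lemma nm_space_eq_PiM: "nm_space p q = PiM UNIV (nm_coord p q)"
  unfolding nm_space_def nm_coord_def ..

lemma prob_space_nm_coord: "prob_space (nm_coord p q i)"
  by (cases i) (simp_all add: nm_coord_def prob_space_measure_pmf)

lemma sets_nm_coord [simp]: "sets (nm_coord p q i) = UNIV"
  by (cases i) (simp_all add: nm_coord_def)

interpretation nm: prob_space "nm_space p q" for p q
  unfolding nm_space_eq_PiM by (intro prob_space_PiM prob_space_nm_coord)

lemma measurable_nm_coord: "i \<in> K \<Longrightarrow> Measurable.pred (PiM K (nm_coord p q)) (\<lambda>\<omega>. \<omega> i)"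
  using measurable_component_singleton[of i K "nm_coord p q"]
  by (subst measurable_cong_sets[OF refl, of _ "nm_coord p q i"]) auto

lemma prob_nm_coord:
  "nm.prob p q {\<omega> \<in> space (nm_space p q). \<omega> i} = measure (nm_coord p q i) {True}"
proof -
  have "{\<omega> \<in> space (nm_space p q). \<omega> i} = (\<lambda>\<omega>. \<omega> i) -` {True} \<inter> space (nm_space p q)"
    by auto
  also have "nm.prob p q \<dots> = measure (distr (nm_space p q) (nm_coord p q i) (\<lambda>\<omega>. \<omega> i)) {True}"
    by (rule measure_distr[symmetric]) (auto simp: nm_space_eq_PiM measurable_component_singleton)
  also have "distr (nm_space p q) (nm_coord p q i) (\<lambda>\<omega>. \<omega> i) = nm_coord p q i"
    unfolding nm_space_eq_PiM by (rule distr_PiM_component[OF prob_space_nm_coord]) simp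
  finally show ?thesis .
qed

lemma prob_nm_Inl: "0 \<le> q \<Longrightarrow> q \<le> 1 \<Longrightarrow> nm.prob p q {\<omega> \<in> space (nm_space p q). \<omega> (Inl v)} = q"
  by (simp add: prob_nm_coord nm_coord_def measure_pmf_single)

lemma prob_nm_Inr: "0 \<le> p \<Longrightarrow> p \<le> 1 \<Longrightarrow> nm.prob p q {\<omega> \<in> space (nm_space p q). \<omega> (Inr w)} = p"
  by (simp add: prob_nm_coord nm_coord_def measure_pmf_single)

lemma indep_vars_nm_coord:
  "nm.indep_vars p q (nm_coord p q) (\<lambda>i \<omega>. \<omega> i) UNIV"
proof (subst nm.indep_vars_iff_distr_eq_PiM)
  show "(\<lambda>\<omega>. \<omega> i) \<in> measurable (nm_space p q) (nm_coord p q i)" for i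
    unfolding nm_space_eq_PiM by (rule measurable_component_singleton) simp
  have "(\<lambda>i. distr (PiM UNIV (nm_coord p q)) (nm_coord p q i) (\<lambda>\<omega>. \<omega> i)) = nm_coord p q"
    by (rule ext, rule distr_PiM_component[OF prob_space_nm_coord]) simp
  then show "distr (nm_space p q) (PiM UNIV (nm_coord p q)) (\<lambda>\<omega>. \<lambda>i\<in>UNIV. \<omega> i)
      = PiM UNIV (\<lambda>i. distr (nm_space p q) (nm_coord p q i) (\<lambda>\<omega>. \<omega> i))"
    unfolding nm_space_eq_PiM by (simp add: restrict_UNIV)
qed simp

text \<open>The coordinates read by \<open>nm_state k \<omega> t v\<close>: the initial states of the descendants of
  \<open>v\<close> at depth \<open>t\<close>, and the coin of each descendant at depth \<open>d < t\<close> for round \<open>t - d - 1\<close>.\<close>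
definition nm_deps :: "nat \<Rightarrow> nat list \<Rightarrow> (nat list + nat list \<times> nat) set" where
  "nm_deps t v = {Inl (u @ v) | u. length u = t} \<union> {Inr (u @ v, s) | u s. length u + s + 1 = t}"

lemma Inl_mem_nm_deps: "Inl v \<in> nm_deps 0 v"
  unfolding nm_deps_def by auto

lemma Inr_mem_nm_deps: "Inr (v, t) \<in> nm_deps (Suc t) v"
  unfolding nm_deps_def by force

lemma Inr_notin_nm_deps_child: "Inr (v, t) \<notin> nm_deps t (i # v)"
  unfolding nm_deps_def by auto

lemma nm_deps_child_subset: "nm_deps t (i # v) \<subseteq> nm_deps (Suc t) v"
proof
  fix x assume "x \<in> nm_deps t (i # v)"
  then consider u where "x = Inl ((u @ [i]) @ v)" "length u = t"
    | u s where "x = Inr ((u @ [i]) @ v, s)" "length u + s + 1 = t"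
    unfolding nm_deps_def by auto
  then show "x \<in> nm_deps (Suc t) v"
    by cases (unfold nm_deps_def, fastforce+)
qed

lemma nm_deps_children_disjoint: "i \<noteq> j \<Longrightarrow> nm_deps t (i # v) \<inter> nm_deps t (j # v) = {}"
  unfolding nm_deps_def by auto

lemma nm_state_cong_deps:
  "(\<And>x. x \<in> nm_deps t v \<Longrightarrow> \<omega> x = \<omega>' x) \<Longrightarrow> nm_state k \<omega> t v = nm_state k \<omega>' t v"
proof (induction t arbitrary: v)
  case 0
  then show ?case using Inl_mem_nm_deps by simp
next
  case (Suc t)
  have "nm_state k \<omega> t (i # v) = nm_state k \<omega>' t (i # v)" for i
    using Suc nm_deps_child_subset by blast
  moreover have "\<omega> (Inr (v, t)) = \<omega>' (Inr (v, t))"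
    using Suc.prems Inr_mem_nm_deps by blast
  ultimately show ?case by simp
qed

lemma measurable_nm_state:
  "nm_deps t v \<subseteq> K \<Longrightarrow> Measurable.pred (PiM K (nm_coord p q)) (\<lambda>\<omega>. nm_state k \<omega> t v)"
proof (induction t arbitrary: v)
  case 0
  then show ?case using Inl_mem_nm_deps by (simp add: measurable_nm_coord subset_iff)
next
  case (Suc t)
  have "Measurable.pred (PiM K (nm_coord p q)) (\<lambda>\<omega>. nm_state k \<omega> t (i # v))" for i
    using Suc nm_deps_child_subset by blast
  moreover have "Measurable.pred (PiM K (nm_coord p q)) (\<lambda>\<omega>. \<omega> (Inr (v, t)))"
    using Suc.prems Inr_mem_nm_deps by (blast intro: measurable_nm_coord)
  ultimately show ?case by simp measurable
qed

lemma indep_vars_nm_children_coin: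
  "nm.indep_vars p q (\<lambda>_. count_space UNIV)
     (\<lambda>j \<omega>. if j < k then nm_state k \<omega> t (j # v) else \<omega> (Inr (v, t))) {..k}"
proof -
  define K where "K j = (if j < k then nm_deps t (j # v) else {Inr (v, t)})" for j
  define Y where "Y j \<omega> = (if j < k then nm_state k \<omega> t (j # v) else \<omega> (Inr (v, t)))" for j \<omega>
  have "disjoint_family_on K {..k}"
    unfolding disjoint_family_on_def K_def
    using nm_deps_children_disjoint Inr_notin_nm_deps_child by auto
  then have "nm.indep_vars p q (\<lambda>j. PiM (K j) (nm_coord p q)) (\<lambda>j \<omega>. restrict \<omega> (K j)) {..k}"
    using nm.indep_vars_restrict[OF indep_vars_nm_coord] by simp
  then have "nm.indep_vars p q (\<lambda>_. count_space UNIV) (\<lambda>j \<omega>. Y j (restrict \<omega> (K j))) {..k}"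
    by (rule nm.indep_vars_compose2)
      (auto simp: K_def Y_def measurable_nm_state measurable_nm_coord)
  moreover have "Y j (restrict \<omega> (K j)) = Y j \<omega>" for j \<omega>
    unfolding Y_def K_def
    by (simp add: nm_state_cong_deps[of t "j # v" "restrict \<omega> (nm_deps t (j # v))" \<omega>])
  ultimately show ?thesis
    by (simp add: Y_def)
qed

lemma prob_nm_state_Suc:
  assumes "0 \<le> p" "p \<le> 1" "0 \<le> r" "r \<le> 1"
    and child: "\<And>j. j < k \<Longrightarrow> nm.prob p q {\<omega> \<in> space (nm_space p q). nm_state k \<omega> t (j # v)} = r"
  shows "nm.prob p q {\<omega> \<in> space (nm_space p q). nm_state k \<omega> (Suc t) v} = (1 - p) * maj_prob k r"
proof -
  define W where "W j \<omega> = (if j < k then nm_state k \<omega> t (j # v) else \<omega> (Inr (v, t)))" for j \<omega>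
  define \<S> where "\<S> = {S. S \<subseteq> {..<k} \<and> k + 1 \<le> 2 * card S}"
  define \<rho> where "\<rho> j = nm.prob p q {\<omega> \<in> space (nm_space p q). W j \<omega>}" for j
  have \<rho>: "\<rho> j = (if j < k then r else p)" if "j \<le> k" for j
    using that child prob_nm_Inr[OF assms(1,2)] by (auto simp: \<rho>_def W_def)
  have "{\<omega> \<in> space (nm_space p q). nm_state k \<omega> (Suc t) v}
      = {\<omega> \<in> space (nm_space p q). {j \<in> {..k}. W j \<omega>} \<in> \<S>}"
  proof -
    have "{j \<in> {..k}. W j \<omega>} \<in> \<S> \<longleftrightarrow> \<not> \<omega> (Inr (v, t)) \<and> k + 1 \<le> 2 * card {j. j < k \<and> nm_state k \<omega> t (j # v)}" for \<omega>
    proof -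
      have "{j \<in> {..k}. W j \<omega>} = {j. j < k \<and> nm_state k \<omega> t (j # v)} \<union> (if \<omega> (Inr (v, t)) then {k} else {})"
        by (auto simp: W_def)
      then show ?thesis by (auto simp: \<S>_def)
    qed
    then show ?thesis by simp
  qed
  also have "nm.prob p q \<dots> = (\<Sum>S\<in>\<S>. \<Prod>j\<in>{..k}. if j \<in> S then \<rho> j else 1 - \<rho> j)"
    unfolding \<rho>_def
    by (rule nm.prob_indep_bool_set[OF indep_vars_nm_children_coin[where k = k and t = t and v = v, folded W_def]])
      (auto simp: \<S>_def)
  also have "\<dots> = (\<Sum>S\<in>\<S>. (1 - p) * (r ^ card S * (1 - r) ^ (k - card S)))"
  proof (rule sum.cong[OF refl])
    fix S assume "S \<in> \<S>"
    then have S: "S \<subseteq> {..<k}" by (simp add: \<S>_def)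
    have "(\<Prod>j\<in>{..k}. if j \<in> S then \<rho> j else 1 - \<rho> j) = (\<Prod>j\<in>{..<k}. if j \<in> S then r else 1 - r) * (1 - p)"
      using S by (auto simp: lessThan_Suc_atMost[symmetric] \<rho> intro!: prod.cong)
    then show "(\<Prod>j\<in>{..k}. if j \<in> S then \<rho> j else 1 - \<rho> j) = (1 - p) * (r ^ card S * (1 - r) ^ (k - card S))"
      using prod_if_mem_eq_power[of "{..<k}" S r "1 - r"] S by simp
  qed
  also have "\<dots> = (1 - p) * (\<Sum>c | c \<le> k \<and> k + 1 \<le> 2 * c. binom_term k c r)"
    using sum_subsets_by_card[where A = "{..<k}" and P = "\<lambda>c. k + 1 \<le> 2 * c" and f = "\<lambda>c. r ^ c * (1 - r) ^ (k - c)"]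
    by (simp add: \<S>_def binom_term_def mult.assoc flip: sum_distrib_left)
  also have "\<dots> = (1 - p) * maj_prob k r"
    using maj_prob_eq_sum assms by simp
  finally show ?thesis .
qed

lemma root_red_prob_eq_iterate:
  assumes "0 \<le> p" "p \<le> 1" "0 \<le> q" "q \<le> 1"
  shows "root_red_prob k p q t = (Fhat_map p k ^^ t) q"
proof -
  have "nm.prob p q {\<omega> \<in> space (nm_space p q). nm_state k \<omega> t v} = (Fhat_map p k ^^ t) q" for v
  proof (induction t arbitrary: v)
    case 0
    show ?case using prob_nm_Inl assms by simp
  next
    case (Suc t)
    let ?r = "(Fhat_map p k ^^ t) q"
    have "0 \<le> ?r" "?r \<le> 1"
      using Suc[of v, symmetric] by simp_all
    then have "nm.prob p q {\<omega> \<in> space (nm_space p q). nm_state k \<omega> (Suc t) v} = (1 - p) * maj_prob k ?r"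
      using Suc by (intro prob_nm_state_Suc assms(1,2))
    also have "\<dots> = (Fhat_map p k ^^ Suc t) q"
      by (simp add: Fhat_map_def)
    finally show ?case .
  qed
  then show ?thesis unfolding root_red_prob_def .
qed

section \<open>Unimodal functions and monotone iterations\<close>

lemma unimodal_less_max:
  fixes g :: "real \<Rightarrow> real"
  assumes inc: "\<And>x y. 0 < x \<Longrightarrow> x < y \<Longrightarrow> y \<le> c \<Longrightarrow> g x < g y"
    and dec: "\<And>x y. c \<le> x \<Longrightarrow> x < y \<Longrightarrow> y \<le> 1 \<Longrightarrow> g y < g x"
    and "0 < x" "x \<le> 1" "x \<noteq> c"
  shows "g x < g c"
  using assms by (cases "x < c") auto

lemma unimodal_level_set:
  fixes g :: "real \<Rightarrow> real"
  assumes cont: "\<And>a. 0 < a \<Longrightarrow> continuous_on {a..1} g"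
    and inc: "\<And>x y. 0 < x \<Longrightarrow> x < y \<Longrightarrow> y \<le> c \<Longrightarrow> g x < g y"
    and dec: "\<And>x y. c \<le> x \<Longrightarrow> x < y \<Longrightarrow> y \<le> 1 \<Longrightarrow> g y < g x"
    and c: "0 < c" "c < 1"
    and lim: "(g \<longlongrightarrow> 0) (at_right 0)"
    and l: "0 < l" "g 1 \<le> l" "l < g c"
  obtains a b where "0 < a" "a < c" "c < b" "b \<le> 1"
    and "\<And>x. 0 < x \<Longrightarrow> x \<le> 1 \<Longrightarrow> g x < l \<longleftrightarrow> x < a \<or> b < x"
    and "\<And>x. 0 < x \<Longrightarrow> x \<le> 1 \<Longrightarrow> g x = l \<longleftrightarrow> x = a \<or> x = b"
proof -
  have "eventually (\<lambda>x. g x < l) (at_right 0)"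
    using lim l(1) by (rule order_tendstoD)
  then obtain e where "0 < e" and e: "\<And>x. 0 < x \<Longrightarrow> x < e \<Longrightarrow> g x < l"
    unfolding eventually_at_right_field by auto
  define x0 where "x0 = min e c / 2"
  have x0: "0 < x0" "x0 < c" "g x0 < l"
    using \<open>0 < e\<close> c e by (auto simp: x0_def)
  have "continuous_on {x0..c} g"
    using cont[OF x0(1)] by (rule continuous_on_subset) (use c in auto)
  then obtain a where a: "x0 \<le> a" "a \<le> c" "g a = l"
    using IVT'[of g x0 l c] x0 l by auto
  obtain b where b: "c \<le> b" "b \<le> 1" "g b = l"
    using IVT2'[of g 1 l c] l cont[of c] c by auto
  have "a \<noteq> c" "b \<noteq> c"
    using a b l by auto
  then have ab: "0 < a" "a < c" "c < b" "b \<le> 1"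
    using a b x0 by auto
  have lt: "g x < l" if "0 < x" "x < a \<or> b < x" "x \<le> 1" for x
    using that ab a b inc[of x a] dec[of b x] by auto
  have gt: "l < g x" if "a < x" "x < b" for x
    using that ab a b inc[of a x] dec[of x b] by (cases "x \<le> c") auto
  show ?thesis
  proof (rule that[OF ab])
    fix x :: real assume x: "0 < x" "x \<le> 1"
    have "x < a \<or> x = a \<or> a < x \<and> x < b \<or> x = b \<or> b < x"
      by linarith
    then show "g x < l \<longleftrightarrow> x < a \<or> b < x" "g x = l \<longleftrightarrow> x = a \<or> x = b"
      using lt[OF x(1) _ x(2)] gt a(3) b(3) ab by (elim disjE; force)+
  qed
qed

lemma iterates_tendsto_fixpoint_below:
  fixes f :: "real \<Rightarrow> real"
  assumes mono: "mono_on {L..x0} f" and cont: "continuous_on {L..x0} f"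
    and fixed: "f L = L" and "L \<le> x0"
    and below: "\<And>x. L < x \<Longrightarrow> x \<le> x0 \<Longrightarrow> f x < x"
  shows "(\<lambda>n. (f ^^ n) x0) \<longlonglongrightarrow> L"
proof -
  define s where "s n = (f ^^ n) x0" for n
  have step: "L \<le> f y \<and> f y \<le> y" if "L \<le> y" "y \<le> x0" for y
    using mono_onD[OF mono, of L y] below[of y] fixed that \<open>L \<le> x0\<close> by (cases "y = L") auto
  have s: "L \<le> s n \<and> s n \<le> x0" for n
  proof (induction n)
    case (Suc n)
    then show ?case using step[of "s n"] by (simp add: s_def)
  qed (use \<open>L \<le> x0\<close> in \<open>simp add: s_def\<close>)
  have "decseq s"
    using step s by (intro decseq_SucI) (simp add: s_def)
  then obtain l where lim: "s \<longlonglongrightarrow> l"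
    using decseq_convergent[of s L] s by blast
  have l: "L \<le> l" "l \<le> x0"
    using s by (auto intro: LIMSEQ_le_const[OF lim] LIMSEQ_le_const2[OF lim])
  have "(\<lambda>n. f (s n)) \<longlonglongrightarrow> f l"
    using cont lim l s by (intro continuous_on_tendsto_compose[OF cont lim]) auto
  moreover have "(\<lambda>n. f (s n)) \<longlonglongrightarrow> l"
    using LIMSEQ_Suc[OF lim] by (simp add: s_def)
  ultimately have "f l = l"
    by (rule LIMSEQ_unique)
  then have "l = L"
    using below[of l] l by force
  then show ?thesis
    using lim by (simp add: s_def[abs_def])
qed

lemma iterates_tendsto_fixpoint_above:
  fixes f :: "real \<Rightarrow> real"
  assumes mono: "mono_on {x0..U} f" and cont: "continuous_on {x0..U} f"
    and fixed: "f U = U" and "x0 \<le> U"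
    and above: "\<And>x. x0 \<le> x \<Longrightarrow> x < U \<Longrightarrow> x < f x"
  shows "(\<lambda>n. (f ^^ n) x0) \<longlonglongrightarrow> U"
proof -
  define g where "g x = - f (- x)" for x
  have iter: "(g ^^ n) (- x0) = - (f ^^ n) x0" for n
    by (induction n) (simp_all add: g_def)
  have "(\<lambda>n. (g ^^ n) (- x0)) \<longlonglongrightarrow> - U"
  proof (rule iterates_tendsto_fixpoint_below)
    show "mono_on {- U..- x0} g"
      using mono by (auto intro!: mono_onI simp: g_def mono_on_def)
    show "continuous_on {- U..- x0} g"
      unfolding g_def by (intro continuous_intros continuous_on_compose2[OF cont]) auto
    show "g x < x" if "- U < x" "x \<le> - x0" for x
      using above[of "- x"] that by (simp add: g_def)
  qed (use fixed \<open>x0 \<le> U\<close> in \<open>simp_all add: g_def\<close>)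
  then show ?thesis
    by (simp add: iter tendsto_minus_cancel_left)
qed

section \<open>The majority polynomial\<close>

definition maj_poly :: "nat \<Rightarrow> real \<Rightarrow> real" where
  "maj_poly m = binom_tail (2 * m + 1) (Suc m)"

definition maj_poly_deriv :: "nat \<Rightarrow> real \<Rightarrow> real" where
  "maj_poly_deriv m x = real (2 * m + 1) * real ((2 * m) choose m) * (x * (1 - x)) ^ m"

lemma maj_poly_has_derivative: "(maj_poly m has_real_derivative maj_poly_deriv m x) (at x)"
  using binom_tail_has_derivative[of "2 * m" m x]
  by (simp add: maj_poly_def maj_poly_deriv_def binom_term_def power_mult_distrib mult.assoc)

lemma isCont_maj_poly: "isCont (maj_poly m) x"
  using maj_poly_has_derivative by (rule DERIV_isCont)

lemma maj_poly_0 [simp]: "maj_poly m 0 = 0"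
  by (simp add: maj_poly_def binom_tail_def binom_term_def)

lemma maj_poly_1 [simp]: "maj_poly m 1 = 1"
proof -
  have "maj_poly m 1 = (\<Sum>j\<in>{Suc m..2 * m + 1}. if j = 2 * m + 1 then 1 else 0)"
    unfolding maj_poly_def binom_tail_def binom_term_def by (rule sum.cong) auto
  then show ?thesis by simp
qed

lemma maj_poly_deriv_pos: "0 < x \<Longrightarrow> x < 1 \<Longrightarrow> 0 < maj_poly_deriv m x"
  by (simp add: maj_poly_deriv_def)

lemma maj_poly_deriv_1: "1 \<le> m \<Longrightarrow> maj_poly_deriv m 1 = 0"
  by (simp add: maj_poly_deriv_def)

text \<open>\<open>maj_poly_deriv m x\<close> depends on \<open>x\<close> only through \<open>x (1 - x) = 1/4 - (x - 1/2)\<^sup>2\<close>.\<close>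
lemma maj_poly_deriv_less:
  assumes "1 \<le> m" "0 \<le> x" "x \<le> 1" "\<bar>y - 1/2\<bar> < \<bar>x - 1/2\<bar>"
  shows "maj_poly_deriv m x < maj_poly_deriv m y"
proof -
  have "\<bar>y - 1/2\<bar>\<^sup>2 < \<bar>x - 1/2\<bar>\<^sup>2"
    using assms(4) by (intro power_strict_mono) auto
  then have "x * (1 - x) < y * (1 - y)"
    by (simp add: power2_eq_square algebra_simps)
  then have "(x * (1 - x)) ^ m < (y * (1 - y)) ^ m"
    using assms by (intro power_strict_mono) auto
  then show ?thesis
    by (simp add: maj_poly_deriv_def)
qed

lemma maj_poly_MVT:
  "a < b \<Longrightarrow> \<exists>z. a < z \<and> z < b \<and> maj_poly m b - maj_poly m a = (b - a) * maj_poly_deriv m z"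
  using MVT2[of a b "maj_poly m" "maj_poly_deriv m"] maj_poly_has_derivative by blast

lemma maj_poly_strict_mono:
  assumes "0 \<le> a" "a < b" "b \<le> 1"
  shows "maj_poly m a < maj_poly m b"
proof -
  obtain z where z: "a < z" "z < b" "maj_poly m b - maj_poly m a = (b - a) * maj_poly_deriv m z"
    using maj_poly_MVT[OF \<open>a < b\<close>] by blast
  have "0 < (b - a) * maj_poly_deriv m z"
    using z assms maj_poly_deriv_pos[of z m] by simp
  then show ?thesis
    using z(3) by linarith
qed

lemma maj_poly_mono: "0 \<le> a \<Longrightarrow> a \<le> b \<Longrightarrow> b \<le> 1 \<Longrightarrow> maj_poly m a \<le> maj_poly m b"
  using maj_poly_strict_mono[of a b m] by (cases "a = b") auto

lemma maj_poly_le_1: "0 \<le> x \<Longrightarrow> x \<le> 1 \<Longrightarrow> maj_poly m x \<le> 1"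
  using maj_poly_mono[of x 1 m] by simp

lemma maj_poly_Suc:
  "maj_poly (Suc m) x
     = maj_poly m x + real ((2 * m + 1) choose m) * x ^ (m + 1) * (1 - x) ^ (m + 1) * (2 * x - 1)"
proof -
  define n where "n = 2 * m + 1"
  have "n choose Suc m = n choose m"
    unfolding n_def using binomial_symmetric[of m "2 * m + 1"] by simp
  then have term_m: "binom_term n m x = real (n choose m) * x ^ m * (1 - x) ^ (m + 1)"
    and term_Suc_m: "binom_term n (Suc m) x = real (n choose m) * x ^ (m + 1) * (1 - x) ^ m"
    by (simp_all add: binom_term_def n_def)
  have split: "maj_poly m x = binom_term n (Suc m) x + binom_tail n (Suc (Suc m)) x"
    unfolding maj_poly_def n_def[symmetric] by (rule binom_tail_split)
  have "maj_poly (Suc m) x = binom_tail (Suc (Suc n)) (Suc (Suc m)) x"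
    by (simp add: maj_poly_def n_def)
  also have "\<dots> = maj_poly m x + x\<^sup>2 * binom_term n m x - (1 - x)\<^sup>2 * binom_term n (Suc m) x"
    unfolding binom_tail_Suc_Suc binom_tail_split[of n m x] binom_tail_split[of n "Suc m" x] split
    by (simp add: algebra_simps power2_eq_square)
  moreover have "x\<^sup>2 * binom_term n m x - (1 - x)\<^sup>2 * binom_term n (Suc m) x
      = real (n choose m) * x ^ (m + 1) * (1 - x) ^ (m + 1) * (2 * x - 1)"
    unfolding term_m term_Suc_m by (simp add: algebra_simps power2_eq_square)
  ultimately show ?thesis
    by (simp add: n_def)
qed

lemma maj_poly_mono_degree:
  assumes "1/2 \<le> x" "x \<le> 1" "m \<le> m'"
  shows "maj_poly m x \<le> maj_poly m' x"
  using assms(3)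
proof (induction rule: dec_induct)
  case (step m')
  have "0 \<le> real ((2 * m' + 1) choose m') * x ^ (m' + 1) * (1 - x) ^ (m' + 1) * (2 * x - 1)"
    using assms by simp
  then show ?case
    using step maj_poly_Suc[of m' x] by linarith
qed simp

lemma maj_poly_1_three_quarters: "maj_poly 1 (3/4) = 27/32"
  by (simp add: maj_poly_def binom_tail_def binom_term_def numeral_3_eq_3)

definition maj_intercept :: "nat \<Rightarrow> real \<Rightarrow> real" where
  "maj_intercept m x = maj_poly m x - x * maj_poly_deriv m x"

lemma isCont_maj_intercept: "isCont (maj_intercept m) x"
  unfolding maj_intercept_def maj_poly_deriv_def
  by (intro continuous_intros isCont_maj_poly)

lemma maj_intercept_neg:
  assumes "1 \<le> m" "0 < x" "x \<le> 1/2"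
  shows "maj_intercept m x < 0"
proof -
  obtain z where z: "0 < z" "z < x" "maj_poly m x = x * maj_poly_deriv m z"
    using maj_poly_MVT[of 0 x m] assms by auto
  have "maj_poly_deriv m z < maj_poly_deriv m x"
    using z assms by (intro maj_poly_deriv_less) auto
  then show ?thesis
    using z assms by (simp add: maj_intercept_def)
qed

lemma maj_intercept_strict_mono:
  assumes "1 \<le> m" "1/2 \<le> x" "x < y" "y \<le> 1"
  shows "maj_intercept m x < maj_intercept m y"
proof -
  obtain z where z: "x < z" "z < y" "maj_poly m y - maj_poly m x = (y - x) * maj_poly_deriv m z"
    using maj_poly_MVT[of x y m] assms by auto
  have "maj_poly_deriv m y < maj_poly_deriv m x" "maj_poly_deriv m y < maj_poly_deriv m z"
    using assms z by (auto intro!: maj_poly_deriv_less)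
  moreover have "maj_intercept m y - maj_intercept m x
      = x * (maj_poly_deriv m x - maj_poly_deriv m y) + (y - x) * (maj_poly_deriv m z - maj_poly_deriv m y)"
    using z(3) by (simp add: maj_intercept_def algebra_simps)
  moreover have "0 < x * (maj_poly_deriv m x - maj_poly_deriv m y)"
    and "0 < (y - x) * (maj_poly_deriv m z - maj_poly_deriv m y)"
    using calculation assms by simp_all
  ultimately show ?thesis
    by linarith
qed

lemma maj_intercept_1: "1 \<le> m \<Longrightarrow> maj_intercept m 1 = 1"
  by (simp add: maj_intercept_def maj_poly_deriv_1)

definition maj_ratio_argmax :: "nat \<Rightarrow> real" where
  "maj_ratio_argmax m = (SOME c. 1/2 < c \<and> c < 1 \<and> maj_intercept m c = 0)"

lemma maj_ratio_argmax:
  assumes "1 \<le> m"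
  shows "1/2 < maj_ratio_argmax m" "maj_ratio_argmax m < 1" "maj_intercept m (maj_ratio_argmax m) = 0"
proof -
  obtain c where c: "1/2 \<le> c" "c \<le> 1" "maj_intercept m c = 0"
    using IVT[of "maj_intercept m" "1/2" 0 1] maj_intercept_neg[OF assms, of "1/2"] maj_intercept_1[OF assms]
    by (auto intro: isCont_maj_intercept)
  then have "1/2 < c \<and> c < 1 \<and> maj_intercept m c = 0"
    using maj_intercept_neg[OF assms, of "1/2"] maj_intercept_1[OF assms]
    by (cases "c = 1/2"; cases "c = 1") auto
  then have "1/2 < maj_ratio_argmax m \<and> maj_ratio_argmax m < 1 \<and> maj_intercept m (maj_ratio_argmax m) = 0"
    unfolding maj_ratio_argmax_def by (rule someI)
  then show "1/2 < maj_ratio_argmax m" "maj_ratio_argmax m < 1" "maj_intercept m (maj_ratio_argmax m) = 0"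
    by auto
qed

lemma sgn_maj_intercept:
  assumes "1 \<le> m" "0 < x" "x \<le> 1"
  shows "sgn (maj_intercept m x) = sgn (x - maj_ratio_argmax m)"
proof -
  note c = maj_ratio_argmax[OF \<open>1 \<le> m\<close>]
  show ?thesis
  proof (cases "x \<le> 1/2")
    case True
    then show ?thesis using maj_intercept_neg[of m x] c assms by simp
  next
    case False
    then show ?thesis
      using maj_intercept_strict_mono[of m x "maj_ratio_argmax m"]
        maj_intercept_strict_mono[of m "maj_ratio_argmax m" x] c assms
      by (cases x "maj_ratio_argmax m" rule: linorder_cases) auto
  qed
qed

definition maj_ratio :: "nat \<Rightarrow> real \<Rightarrow> real" where
  "maj_ratio m x = maj_poly m x / x"

definition maj_ratio_max :: "nat \<Rightarrow> real" where
  "maj_ratio_max m = maj_ratio m (maj_ratio_argmax m)"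

lemma maj_ratio_has_derivative:
  "x \<noteq> 0 \<Longrightarrow> (maj_ratio m has_real_derivative - maj_intercept m x / x\<^sup>2) (at x)"
  unfolding maj_ratio_def[abs_def]
  by (auto intro!: derivative_eq_intros maj_poly_has_derivative
      simp: maj_intercept_def power2_eq_square field_simps)

lemma continuous_on_maj_ratio: "0 < a \<Longrightarrow> continuous_on {a..b} (maj_ratio m)"
  by (rule continuous_at_imp_continuous_on) (auto intro!: DERIV_isCont maj_ratio_has_derivative)

lemma maj_ratio_1 [simp]: "maj_ratio m 1 = 1"
  by (simp add: maj_ratio_def)

lemma maj_ratio_tendsto_0:
  assumes "1 \<le> m"
  shows "(maj_ratio m \<longlongrightarrow> 0) (at_right 0)"
proof -
  have "(maj_ratio m \<longlongrightarrow> maj_poly_deriv m 0) (at 0)"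
    using maj_poly_has_derivative[of m 0]
    unfolding has_field_derivative_iff maj_ratio_def[abs_def] by simp
  moreover have "maj_poly_deriv m 0 = 0"
    using assms by (simp add: maj_poly_deriv_def)
  ultimately show ?thesis
    by (auto intro: tendsto_mono[OF at_le[OF subset_UNIV]])
qed

lemma maj_ratio_strict_mono:
  assumes "1 \<le> m" "0 < x" "x < y" "y \<le> maj_ratio_argmax m"
  shows "maj_ratio m x < maj_ratio m y"
proof (rule DERIV_pos_imp_increasing_open[OF \<open>x < y\<close>])
  fix z assume "x < z" "z < y"
  then have "maj_intercept m z < 0"
    using sgn_maj_intercept[of m z] maj_ratio_argmax[OF \<open>1 \<le> m\<close>] assms by (auto simp: sgn_if split: if_splits)
  moreover have "0 < z"
    using \<open>x < z\<close> assms by simp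
  ultimately show "\<exists>d. (maj_ratio m has_real_derivative d) (at z) \<and> 0 < d"
    using maj_ratio_has_derivative[of z m]
    by (intro exI[of _ "- maj_intercept m z / z\<^sup>2"]) (simp add: divide_neg_pos)
qed (use assms in \<open>auto intro: continuous_on_maj_ratio\<close>)

lemma maj_ratio_strict_antimono:
  assumes "1 \<le> m" "maj_ratio_argmax m \<le> x" "x < y" "y \<le> 1"
  shows "maj_ratio m y < maj_ratio m x"
proof (rule DERIV_neg_imp_decreasing_open[OF \<open>x < y\<close>])
  note c = maj_ratio_argmax[OF \<open>1 \<le> m\<close>]
  fix z assume "x < z" "z < y"
  then have "0 < maj_intercept m z"
    using sgn_maj_intercept[of m z] c assms by (auto simp: sgn_if split: if_splits)
  then show "\<exists>d. (maj_ratio m has_real_derivative d) (at z) \<and> d < 0"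
    using maj_ratio_has_derivative[of z m] \<open>x < z\<close> c assms
    by (intro exI[of _ "- maj_intercept m z / z\<^sup>2"]) auto
qed (use assms maj_ratio_argmax[OF \<open>1 \<le> m\<close>] in \<open>auto intro: continuous_on_maj_ratio\<close>)

lemma maj_ratio_less_max:
  "1 \<le> m \<Longrightarrow> 0 < x \<Longrightarrow> x \<le> 1 \<Longrightarrow> x \<noteq> maj_ratio_argmax m \<Longrightarrow> maj_ratio m x < maj_ratio_max m"
  unfolding maj_ratio_max_def
  by (rule unimodal_less_max[where g = "maj_ratio m"]) (auto intro: maj_ratio_strict_mono maj_ratio_strict_antimono)

lemma maj_ratio_le_max: "1 \<le> m \<Longrightarrow> 0 < x \<Longrightarrow> x \<le> 1 \<Longrightarrow> maj_ratio m x \<le> maj_ratio_max m"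
  using maj_ratio_less_max[of m x] by (cases "x = maj_ratio_argmax m") (auto simp: maj_ratio_max_def)

lemma maj_ratio_max_bounds:
  assumes "1 \<le> m"
  shows "9/8 \<le> maj_ratio_max m" "maj_ratio_max m < 2"
proof -
  note c = maj_ratio_argmax[OF assms]
  have "27/32 \<le> maj_poly m (3/4)"
    using maj_poly_mono_degree[of "3/4" 1 m] assms maj_poly_1_three_quarters by simp
  then have "9/8 \<le> maj_ratio m (3/4)"
    by (simp add: maj_ratio_def)
  also have "\<dots> \<le> maj_ratio_max m"
    using assms by (rule maj_ratio_le_max) auto
  finally show "9/8 \<le> maj_ratio_max m" .
  have "maj_poly m (maj_ratio_argmax m) / maj_ratio_argmax m \<le> 1 / maj_ratio_argmax m"
    using c maj_poly_le_1[of "maj_ratio_argmax m" m] by (intro divide_right_mono) auto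
  also have "\<dots> < 2"
    using c by (simp add: field_simps)
  finally show "maj_ratio_max m < 2"
    by (simp add: maj_ratio_max_def maj_ratio_def)
qed

section \<open>Fixed points of \<open>Fhat\<close> and the critical value\<close>

lemma Fhat_map_eq_maj_poly: "0 \<le> x \<Longrightarrow> x \<le> 1 \<Longrightarrow> Fhat_map p (2 * m + 1) x = (1 - p) * maj_poly m x"
  by (simp add: Fhat_map_def maj_prob_eq_binom_tail maj_poly_def)

lemma Fhat_map_0 [simp]: "Fhat_map p k 0 = 0"
  by (simp add: Fhat_map_def)

lemma mono_on_Fhat_map: "p \<le> 1 \<Longrightarrow> mono_on {0..1} (Fhat_map p (2 * m + 1))"
proof (rule mono_onI)
  fix x y :: real assume "p \<le> 1" "x \<in> {0..1}" "y \<in> {0..1}" "x \<le> y"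
  then show "Fhat_map p (2 * m + 1) x \<le> Fhat_map p (2 * m + 1) y"
    using Fhat_map_eq_maj_poly[of x p m] Fhat_map_eq_maj_poly[of y p m] maj_poly_mono[of x y m]
    by (simp add: mult_left_mono)
qed

lemma continuous_on_Fhat_map: "continuous_on {0..1} (Fhat_map p (2 * m + 1))"
proof -
  have "continuous_on {0..1} (\<lambda>x. (1 - p) * maj_poly m x)"
    by (intro continuous_intros continuous_at_imp_continuous_on ballI isCont_maj_poly)
  moreover have "continuous_on {0..1} (Fhat_map p (2 * m + 1)) = continuous_on {0..1} (\<lambda>x. (1 - p) * maj_poly m x)"
    by (intro continuous_on_cong refl Fhat_map_eq_maj_poly) auto
  ultimately show ?thesis by simp
qed

lemma sgn_Fhat_map_sub:
  assumes "p < 1" "0 < x" "x \<le> 1"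
  shows "sgn (Fhat_map p (2 * m + 1) x - x) = sgn (maj_ratio m x - 1 / (1 - p))"
proof -
  have "Fhat_map p (2 * m + 1) x - x = ((1 - p) * x) * (maj_ratio m x - 1 / (1 - p))"
    unfolding Fhat_map_eq_maj_poly[OF less_imp_le[OF \<open>0 < x\<close>] \<open>x \<le> 1\<close>]
    using assms by (simp add: maj_ratio_def field_simps)
  then show ?thesis
    using assms by (simp add: sgn_mult)
qed

definition pcrit :: "nat \<Rightarrow> real" where
  "pcrit m = 1 - 1 / maj_ratio_max m"

lemma pcrit_bounds: "1 \<le> m \<Longrightarrow> 1/9 \<le> pcrit m \<and> pcrit m < 1/2"
  using maj_ratio_max_bounds[of m] by (simp add: pcrit_def field_simps)

lemma fixpts_Fhat_iff:
  "x \<in> fixpts_Fhat p k \<longleftrightarrow> x = 0 \<or> (0 < x \<and> x \<le> 1 \<and> Fhat_map p k x = x)"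
  by (auto simp: fixpts_Fhat_def)

lemma fixpts_Fhat_below_pcrit:
  assumes "1 \<le> m" "0 \<le> p" "p < pcrit m"
  obtains a b where "0 < a" "a < b" "b \<le> 1" "fixpts_Fhat p (2 * m + 1) = {0, a, b}"
    and "\<And>x. 0 < x \<Longrightarrow> x < a \<Longrightarrow> Fhat_map p (2 * m + 1) x < x"
    and "\<And>x. a < x \<Longrightarrow> x < b \<Longrightarrow> x < Fhat_map p (2 * m + 1) x"
    and "\<And>x. b < x \<Longrightarrow> x \<le> 1 \<Longrightarrow> Fhat_map p (2 * m + 1) x < x"
proof -
  note c = maj_ratio_argmax[OF \<open>1 \<le> m\<close>]
  have "p < 1" using pcrit_bounds[OF \<open>1 \<le> m\<close>] assms by simp
  let ?l = "1 / (1 - p)"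
  have l: "1 \<le> ?l" "?l < maj_ratio_max m"
    using assms \<open>p < 1\<close> maj_ratio_max_bounds[OF \<open>1 \<le> m\<close>] by (auto simp: pcrit_def field_simps)
  obtain a b where ab: "0 < a" "a < maj_ratio_argmax m" "maj_ratio_argmax m < b" "b \<le> 1"
    and less: "\<And>x. 0 < x \<Longrightarrow> x \<le> 1 \<Longrightarrow> maj_ratio m x < ?l \<longleftrightarrow> x < a \<or> b < x"
    and eq: "\<And>x. 0 < x \<Longrightarrow> x \<le> 1 \<Longrightarrow> maj_ratio m x = ?l \<longleftrightarrow> x = a \<or> x = b"
    by (rule unimodal_level_set[of "maj_ratio m" "maj_ratio_argmax m" ?l])
      (use \<open>p < 1\<close> l c maj_ratio_tendsto_0[OF \<open>1 \<le> m\<close>] maj_ratio_strict_mono[OF \<open>1 \<le> m\<close>]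
        maj_ratio_strict_antimono[OF \<open>1 \<le> m\<close>] continuous_on_maj_ratio
        in \<open>simp_all add: maj_ratio_max_def\<close>)
  have F_less: "Fhat_map p (2 * m + 1) x < x \<longleftrightarrow> x < a \<or> b < x"
    and F_eq: "Fhat_map p (2 * m + 1) x = x \<longleftrightarrow> x = a \<or> x = b" if "0 < x" "x \<le> 1" for x
    using sgn_Fhat_map_sub[OF \<open>p < 1\<close> that, of m] less[OF that] eq[OF that]
    by (auto simp: sgn_if split: if_splits)
  show ?thesis
  proof (rule that[of a b])
    show "fixpts_Fhat p (2 * m + 1) = {0, a, b}"
      using ab F_eq by (auto simp: fixpts_Fhat_iff)
    show "Fhat_map p (2 * m + 1) x < x" if "0 < x" "x < a" for x
      using F_less[of x] that ab by simp
    show "x < Fhat_map p (2 * m + 1) x" if "a < x" "x < b" for x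
      using F_less[of x] F_eq[of x] that ab by simp
    show "Fhat_map p (2 * m + 1) x < x" if "b < x" "x \<le> 1" for x
      using F_less[of x] that ab by simp
  qed (use ab in auto)
qed

lemma fixpts_Fhat_pcrit:
  assumes "1 \<le> m"
  shows "fixpts_Fhat (pcrit m) (2 * m + 1) = {0, maj_ratio_argmax m}"
proof -
  note c = maj_ratio_argmax[OF assms]
  have "pcrit m < 1" using pcrit_bounds[OF assms] by simp
  have "1 / (1 - pcrit m) = maj_ratio_max m"
    using maj_ratio_max_bounds[OF assms] by (simp add: pcrit_def)
  then have "Fhat_map (pcrit m) (2 * m + 1) x = x \<longleftrightarrow> x = maj_ratio_argmax m" if "0 < x" "x \<le> 1" for x
    using sgn_Fhat_map_sub[OF \<open>pcrit m < 1\<close> that, of m] maj_ratio_less_max[OF assms that]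
    by (cases "x = maj_ratio_argmax m") (auto simp: sgn_if maj_ratio_max_def split: if_splits)
  then show ?thesis
    using c by (auto simp: fixpts_Fhat_iff)
qed

lemma Fhat_map_less_above_pcrit:
  assumes "1 \<le> m" "pcrit m < p" "p \<le> 1" "0 < x" "x \<le> 1"
  shows "Fhat_map p (2 * m + 1) x < x"
proof (cases "p = 1")
  case True
  then show ?thesis using assms by (simp add: Fhat_map_def)
next
  case False
  have "maj_ratio_max m < 1 / (1 - p)"
    using assms False maj_ratio_max_bounds[OF assms(1)] by (simp add: pcrit_def field_simps)
  then have "maj_ratio m x < 1 / (1 - p)"
    using maj_ratio_le_max[OF assms(1,4,5)] by linarith
  then show ?thesis
    using sgn_Fhat_map_sub[of p x m] False assms by (auto simp: sgn_if split: if_splits)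
qed

lemma fixpts_F_eq_image:
  assumes "0 \<le> p" "p < 1"
  shows "fixpts_F p k = (\<lambda>y. y / (1 - p)) ` fixpts_Fhat p k"
proof (intro equalityI subsetI)
  fix x assume "x \<in> fixpts_F p k"
  then have x: "0 \<le> x" "x \<le> 1" "maj_prob k ((1 - p) * x) = x"
    unfolding fixpts_F_def F_map_def by auto
  then have "(1 - p) * x \<in> fixpts_Fhat p k"
    using assms by (auto simp: fixpts_Fhat_def Fhat_map_def mult_le_one)
  moreover have "x = (1 - p) * x / (1 - p)"
    using assms by simp
  ultimately show "x \<in> (\<lambda>y. y / (1 - p)) ` fixpts_Fhat p k" by blast
next
  fix x assume "x \<in> (\<lambda>y. y / (1 - p)) ` fixpts_Fhat p k"
  then obtain y where y: "0 \<le> y" "y \<le> 1" "(1 - p) * maj_prob k y = y" "x = y / (1 - p)"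
    unfolding fixpts_Fhat_def Fhat_map_def by auto
  have "x = (1 - p) * maj_prob k y / (1 - p)"
    using y(3,4) by simp
  then have x: "x = maj_prob k y"
    using assms by simp
  then have "F_map p k x = x"
    using y(3) by (simp add: F_map_def)
  moreover have "0 \<le> x" "x \<le> 1"
    using x by (simp_all add: maj_prob_def)
  ultimately show "x \<in> fixpts_F p k"
    by (simp add: fixpts_F_def)
qed

lemma card_fixpts_F: "0 \<le> p \<Longrightarrow> p < 1 \<Longrightarrow> card (fixpts_F p k) = card (fixpts_Fhat p k)"
  unfolding fixpts_F_eq_image by (rule card_image) (auto simp: inj_on_def)

lemma fixpts_F_1: "fixpts_F 1 k = {0}"
  by (auto simp: fixpts_F_def F_map_def)

lemma pstar_eq_pcrit:
  assumes "1 \<le> m"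
  shows "pstar (2 * m + 1) = pcrit m"
proof -
  note b = pcrit_bounds[OF assms]
  have below: "card (fixpts_F p (2 * m + 1)) = 3" if p: "0 \<le> p" "p < pcrit m" for p
    by (rule fixpts_Fhat_below_pcrit[OF assms p]) (use card_fixpts_F[of p] p b in simp)
  have at: "card (fixpts_F (pcrit m) (2 * m + 1)) = 2"
    using card_fixpts_F[of "pcrit m"] b fixpts_Fhat_pcrit[OF assms] maj_ratio_argmax[OF assms] by simp
  have above: "fixpts_F p (2 * m + 1) = {0}" if p: "pcrit m < p" "p \<le> 1" for p
  proof (cases "p = 1")
    case False
    then have "fixpts_Fhat p (2 * m + 1) = {0}"
      using Fhat_map_less_above_pcrit[OF assms p] by (force simp: fixpts_Fhat_iff)
    then show ?thesis using False p b by (simp add: fixpts_F_eq_image)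
  qed (simp add: fixpts_F_1)
  show ?thesis
    unfolding pstar_def
  proof (rule the_equality, goal_cases)
    case 1
    show ?case using b below at above by blast
  next
    case (2 ps)
    then show ?case
      using below[of ps] at b by (cases ps "pcrit m" rule: linorder_cases) auto
  qed
qed

lemma sorted_list_of_set_three: "0 < a \<Longrightarrow> a < b \<Longrightarrow> sorted_list_of_set {0, a, b :: real} = [0, a, b]"
  by (subst sorted_list_of_set_unique[symmetric]) auto

lemma Fhat_iterates_below_pcrit:
  assumes "1 \<le> m" "0 \<le> p" "p < pcrit m" "0 \<le> q" "q \<le> 1"
  shows "phi_minus p (2 * m + 1) < q \<Longrightarrow> (\<lambda>t. (Fhat_map p (2 * m + 1) ^^ t) q) \<longlonglongrightarrow> phi_plus p (2 * m + 1)"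
    and "q < phi_minus p (2 * m + 1) \<Longrightarrow> (\<lambda>t. (Fhat_map p (2 * m + 1) ^^ t) q) \<longlonglongrightarrow> 0"
proof -
  let ?f = "Fhat_map p (2 * m + 1)"
  have "p \<le> 1" using assms pcrit_bounds[OF assms(1)] by simp
  have F_mono: "mono_on {x..y} ?f" and F_cont: "continuous_on {x..y} ?f" if "0 \<le> x" "y \<le> 1" for x y
    using mono_on_subset[OF mono_on_Fhat_map[OF \<open>p \<le> 1\<close>]] continuous_on_subset[OF continuous_on_Fhat_map]
      that by auto
  obtain a b where ab: "0 < a" "a < b" "b \<le> 1" "fixpts_Fhat p (2 * m + 1) = {0, a, b}"
    and lt_a: "\<And>x. 0 < x \<Longrightarrow> x < a \<Longrightarrow> ?f x < x"
    and gt: "\<And>x. a < x \<Longrightarrow> x < b \<Longrightarrow> x < ?f x"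
    and lt_b: "\<And>x. b < x \<Longrightarrow> x \<le> 1 \<Longrightarrow> ?f x < x"
    by (rule fixpts_Fhat_below_pcrit[OF assms(1-3)]) blast
  have phi: "phi_minus p (2 * m + 1) = a" "phi_plus p (2 * m + 1) = b"
    unfolding phi_minus_def phi_plus_def ab(4) sorted_list_of_set_three[OF ab(1,2)] by simp_all
  have fixed_b: "?f b = b"
    using ab(4) by (auto simp: fixpts_Fhat_def)
  show "(\<lambda>t. (?f ^^ t) q) \<longlonglongrightarrow> phi_plus p (2 * m + 1)" if "phi_minus p (2 * m + 1) < q"
  proof (cases "q \<le> b")
    case True
    then show ?thesis
      using that ab fixed_b phi gt assms
      by (intro iterates_tendsto_fixpoint_above F_mono F_cont) auto
  next
    case False
    then show ?thesis
      using ab fixed_b phi lt_b assms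
      by (intro iterates_tendsto_fixpoint_below F_mono F_cont) auto
  qed
  show "(\<lambda>t. (?f ^^ t) q) \<longlonglongrightarrow> 0" if "q < phi_minus p (2 * m + 1)"
    using that ab phi lt_a assms
    by (intro iterates_tendsto_fixpoint_below F_mono F_cont) auto
qed

lemma Fhat_iterates_above_pcrit:
  assumes "1 \<le> m" "pcrit m < p" "p \<le> 1" "0 \<le> q" "q \<le> 1"
  shows "(\<lambda>t. (Fhat_map p (2 * m + 1) ^^ t) q) \<longlonglongrightarrow> 0"
  using assms Fhat_map_less_above_pcrit[OF assms(1-3)]
  by (intro iterates_tendsto_fixpoint_below mono_on_subset[OF mono_on_Fhat_map]
      continuous_on_subset[OF continuous_on_Fhat_map]) auto

theorem theorem4p6:
  fixes k :: nat and p q :: real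
  assumes "odd k" and "k \<ge> 3"
    and "0 \<le> p" and "p \<le> 1" and "0 \<le> q" and "q \<le> 1"
  shows "(p < pstar k \<and> q > phi_minus p k \<longrightarrow>
            (root_red_prob k p q \<longlonglongrightarrow> phi_plus p k))
       \<and> (p < pstar k \<and> q < phi_minus p k \<longrightarrow>
            (root_red_prob k p q \<longlonglongrightarrow> 0))
       \<and> (p > pstar k \<longrightarrow> (root_red_prob k p q \<longlonglongrightarrow> 0))"
proof -
  obtain m where k: "k = 2 * m + 1"
    using \<open>odd k\<close> oddE by blast
  then have "1 \<le> m"
    using \<open>k \<ge> 3\<close> by simp
  have "root_red_prob k p q = (\<lambda>t. (Fhat_map p k ^^ t) q)"
    using root_red_prob_eq_iterate assms by blast
  moreover have "pstar k = pcrit m"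
    unfolding k using pstar_eq_pcrit[OF \<open>1 \<le> m\<close>] .
  ultimately show ?thesis
    unfolding k
    using Fhat_iterates_below_pcrit[OF \<open>1 \<le> m\<close>] Fhat_iterates_above_pcrit[OF \<open>1 \<le> m\<close>] assms
    by auto
qed

end
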